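(* Let $(X,G)$ be a Mustafa–Sims metric space which is perfect, i.e. for each $x\in X$ there is a sequence $(x_n)$ in $X\setminus\{x\}$ that $G$-converges to $x$. Then $G$ is symmetric in the sense that $G(x,y,y)=G(x,x,y)$ for all $x,y\in X$.
   Context: A Mustafa–Sims metric on $X$ is a map $G:X^3\to[0,\infty)$ such that: $G$ is invariant under all permutations of its arguments and $G(x,x,x)=0$; $G(x,x,y)=0$ implies $x=y$; $G(x,x,y)\le G(x,y,z)$ whenever $y\ne z$; and $G(x,y,z)\le G(x,u,u)+G(u,y,z)$ for all $x,y,z,u$. A sequence $(x_n)$ $G$-converges to $x$ if $G(x_m,x_n,x)\to0$ as $m,n\to\infty$. *)

theory Defs
  imports Complex_Main
begin

definition G_metric :: "'a set \<Rightarrow> ('a \<Rightarrow> 'a \<Rightarrow> 'a \<Rightarrow> real) \<Rightarrow> bool" where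
  "G_metric X G \<longleftrightarrow>
     (\<forall>x\<in>X. \<forall>y\<in>X. \<forall>z\<in>X. 0 \<le> G x y z) \<and>
     (\<forall>x\<in>X. \<forall>y\<in>X. \<forall>z\<in>X.
        G x y z = G x z y \<and> G x y z = G y x z \<and> G x y z = G y z x \<and>
        G x y z = G z x y \<and> G x y z = G z y x) \<and>
     (\<forall>x\<in>X. G x x x = 0) \<and>
     (\<forall>x\<in>X. \<forall>y\<in>X. G x x y = 0 \<longrightarrow> x = y) \<and>
     (\<forall>x\<in>X. \<forall>y\<in>X. \<forall>z\<in>X. y \<noteq> z \<longrightarrow> G x x y \<le> G x y z) \<and>
     (\<forall>x\<in>X. \<forall>y\<in>X. \<forall>z\<in>X. \<forall>u\<in>X. G x y z \<le> G x u u + G u y z)"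

definition G_converges :: "('a \<Rightarrow> 'a \<Rightarrow> 'a \<Rightarrow> real) \<Rightarrow> (nat \<Rightarrow> 'a) \<Rightarrow> 'a \<Rightarrow> bool" where
  "G_converges G s x \<longleftrightarrow>
     (\<forall>e>0. \<exists>N. \<forall>m\<ge>N. \<forall>n\<ge>N. G (s m) (s n) x < e)"

definition G_perfect :: "'a set \<Rightarrow> ('a \<Rightarrow> 'a \<Rightarrow> 'a \<Rightarrow> real) \<Rightarrow> bool" where
  "G_perfect X G \<longleftrightarrow>
     (\<forall>x\<in>X. \<exists>s. (\<forall>n. s n \<in> X - {x}) \<and> G_converges G s x)"

end

theory Submission
  imports Defs
begin

text \<open>
  In a perfect space every point x has points z \<noteq> x with G(x,x,z) arbitrarily small:
  take two distinct late terms z = s_N and s_m of a sequence G-converging to x, then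
  G(x,x,z) \<le> G(x,z,s_m) = G(z,s_m,x). For such z,
  G(y,y,x) \<le> G(y,x,z) \<le> G(y,x,x) + G(x,x,z), so G(y,y,x) \<le> G(x,x,y), and exchanging
  x and y gives equality.
\<close>

lemma G_metric_nonneg:
  "G_metric X G \<Longrightarrow> x \<in> X \<Longrightarrow> y \<in> X \<Longrightarrow> z \<in> X \<Longrightarrow> 0 \<le> G x y z"
  unfolding G_metric_def by blast

lemma G_metric_swap_13:
  "G_metric X G \<Longrightarrow> x \<in> X \<Longrightarrow> y \<in> X \<Longrightarrow> z \<in> X \<Longrightarrow> G x y z = G z y x"
  unfolding G_metric_def by blast

lemma G_metric_rotate:
  "G_metric X G \<Longrightarrow> x \<in> X \<Longrightarrow> y \<in> X \<Longrightarrow> z \<in> X \<Longrightarrow> G x y z = G y z x"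
  unfolding G_metric_def by blast

lemma G_metric_eq_0_imp_eq:
  "G_metric X G \<Longrightarrow> x \<in> X \<Longrightarrow> y \<in> X \<Longrightarrow> G x x y = 0 \<Longrightarrow> x = y"
  unfolding G_metric_def by blast

lemma G_metric_le_distinct:
  "G_metric X G \<Longrightarrow> x \<in> X \<Longrightarrow> y \<in> X \<Longrightarrow> z \<in> X \<Longrightarrow> y \<noteq> z \<Longrightarrow> G x x y \<le> G x y z"
  unfolding G_metric_def by blast

lemma G_metric_rectangle:
  "G_metric X G \<Longrightarrow> x \<in> X \<Longrightarrow> y \<in> X \<Longrightarrow> z \<in> X \<Longrightarrow> u \<in> X \<Longrightarrow>
    G x y z \<le> G x u u + G u y z"
  unfolding G_metric_def by blast

lemma G_converges_not_eventually_const: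
  assumes G: "G_metric X G" and x: "x \<in> X" and s: "\<forall>n. s n \<in> X - {x}"
    and conv: "G_converges G s x"
  shows "\<exists>m\<ge>N. s m \<noteq> s N"
proof (rule ccontr)
  assume "\<not> (\<exists>m\<ge>N. s m \<noteq> s N)"
  then have const: "s m = s N" if "m \<ge> N" for m
    using that by blast
  have sN: "s N \<in> X" "s N \<noteq> x"
    using s by auto
  have "G (s N) (s N) x < e" if "e > 0" for e
  proof -
    obtain M where "\<forall>m\<ge>M. \<forall>n\<ge>M. G (s m) (s n) x < e"
      using conv \<open>e > 0\<close> unfolding G_converges_def by blast
    then have "G (s (max M N)) (s (max M N)) x < e"
      by simp
    then show ?thesis
      using const[of "max M N"] by simp
  qed
  moreover have "0 \<le> G (s N) (s N) x"
    using G_metric_nonneg[OF G sN(1) sN(1) x] .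
  ultimately have "G (s N) (s N) x = 0"
    by (metis less_le not_less)
  then show False
    using G_metric_eq_0_imp_eq[OF G sN(1) x] sN(2) by blast
qed

lemma G_perfect_approach:
  assumes G: "G_metric X G" and perfect: "G_perfect X G" and x: "x \<in> X" and "e > 0"
  shows "\<exists>z\<in>X - {x}. G x x z < e"
proof -
  obtain s where s: "\<forall>n. s n \<in> X - {x}" and conv: "G_converges G s x"
    using perfect x unfolding G_perfect_def by blast
  obtain N where N: "\<forall>m\<ge>N. \<forall>n\<ge>N. G (s m) (s n) x < e"
    using conv \<open>e > 0\<close> unfolding G_converges_def by blast
  obtain m where m: "m \<ge> N" "s m \<noteq> s N"
    using G_converges_not_eventually_const[OF G x s conv] by blast
  have in_X: "s N \<in> X" "s m \<in> X"
    using s by auto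
  have "G x x (s N) \<le> G x (s N) (s m)"
    using G_metric_le_distinct[OF G x in_X m(2)[symmetric]] .
  also have "\<dots> = G (s N) (s m) x"
    using G_metric_rotate[OF G x in_X] .
  also have "\<dots> < e"
    using N m(1) by blast
  finally show ?thesis
    using s by blast
qed

lemma G_perfect_le_swap:
  assumes G: "G_metric X G" and perfect: "G_perfect X G" and x: "x \<in> X" and y: "y \<in> X"
  shows "G y y x \<le> G x x y"
proof (rule field_le_epsilon)
  fix e :: real
  assume "e > 0"
  then obtain z where z: "z \<in> X" "z \<noteq> x" and small: "G x x z < e"
    using G_perfect_approach[OF G perfect x] by blast
  have "G y y x \<le> G y x z"
    using G_metric_le_distinct[OF G y x z(1)] z(2) by simp
  also have "\<dots> \<le> G y x x + G x x z"
    using G_metric_rectangle[OF G y x z(1) x] .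
  also have "G y x x = G x x y"
    using G_metric_swap_13[OF G y x x] .
  finally show "G y y x \<le> G x x y + e"
    using small by linarith
qed

theorem proposition7:
  fixes X :: "'a set" and G :: "'a \<Rightarrow> 'a \<Rightarrow> 'a \<Rightarrow> real"
  assumes "G_metric X G" and "G_perfect X G"
  shows "\<forall>x\<in>X. \<forall>y\<in>X. G x y y = G x x y"
proof (intro ballI)
  fix x y
  assume x: "x \<in> X" and y: "y \<in> X"
  have "G x y y = G y y x"
    using G_metric_swap_13[OF assms(1) x y y] .
  then show "G x y y = G x x y"
    using G_perfect_le_swap[OF assms x y] G_perfect_le_swap[OF assms y x] by linarith
qed

end
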